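(* For any noisy discrete memoryless classical channel $N_n$, the parallel use of $N_n$ with a perfect $2$-level quantum channel cannot exhibit one-shot zero-error superadditivity under the vertex-encoding protocol; that is, no implementation of the vertex-encoding protocol with $d=2$ transmits more than $\alpha(G(N_n))\cdot 2$ messages.
   Context: A discrete memoryless classical channel $N$ has finite input alphabet $\mathcal{X}$, finite output alphabet $\mathcal{Y}$ and conditional probabilities $P(y|x)$. Distinct inputs $x,x'$ are confusable if some output $y$ has $P(y|x)>0$ and $P(y|x')>0$; the confusability graph $G(N)$ has vertex set $\mathcal{X}$ and edges between distinct confusable inputs, and $\alpha(G(N))$ (its independence number) is the one-shot zero-error capacity of $N$. For each output $y$, the hyperedge $h_y=\{x: P(y|x)>0\}$. A perfect $d$-level quantum channel is the identity channel on states of $\mathbb{C}^d$, with one-shot zero-error capacity $d$. The vertex-encoding protocol with a perfect $d$-level quantum channel: one assigns to every input $v\in\mathcal{X}$ a unit vector $\ket{\psi_v}\in\mathbb{C}^d$ such that $\ket{\psi_v}\perp\ket{\psi_w}$ whenever $v,w$ are adjacent in $G(N)$. Messages are identified with the $n=|\mathcal{X}|$ inputs; to send $v$, the sender inputs $v$ into $N$ and sends $\ket{\psi_v}$ through the perfect quantum channel; upon seeing output $y$, the receiver performs a projective measurement containing the projectors $\ket{\psi_w}\!\bra{\psi_w}$, $w\in h_y$ (completed to the identity), which identifies $v$ with certainty. The protocol transmits $n$ messages with zero error, and it exhibits one-shot zero-error superadditivity if $n>\alpha(G(N))\cdot d$. *)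

theory Defs
  imports "HOL-Analysis.Analysis"
begin

definition dm_channel :: "'x set \<Rightarrow> 'y set \<Rightarrow> ('x \<Rightarrow> 'y \<Rightarrow> real) \<Rightarrow> bool" where
  "dm_channel X Y P \<longleftrightarrow> finite X \<and> finite Y \<and> X \<noteq> {} \<and>
     (\<forall>x\<in>X. \<forall>y\<in>Y. P x y \<ge> 0) \<and> (\<forall>x\<in>X. (\<Sum>y\<in>Y. P x y) = 1)"

text \<open>Distinct inputs are confusable if some output has positive probability under both;
  this is the edge relation of the confusability graph G(N) on vertex set X.\<close>
definition confusable :: "'y set \<Rightarrow> ('x \<Rightarrow> 'y \<Rightarrow> real) \<Rightarrow> 'x \<Rightarrow> 'x \<Rightarrow> bool" where
  "confusable Y P x x' \<longleftrightarrow> x \<noteq> x' \<and> (\<exists>y\<in>Y. P x y > 0 \<and> P x' y > 0)"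

definition noisy_channel :: "'x set \<Rightarrow> 'y set \<Rightarrow> ('x \<Rightarrow> 'y \<Rightarrow> real) \<Rightarrow> bool" where
  "noisy_channel X Y P \<longleftrightarrow> (\<exists>x\<in>X. \<exists>x'\<in>X. confusable Y P x x')"

definition independent_set :: "'x set \<Rightarrow> ('x \<Rightarrow> 'x \<Rightarrow> bool) \<Rightarrow> 'x set \<Rightarrow> bool" where
  "independent_set V E S \<longleftrightarrow> S \<subseteq> V \<and> (\<forall>u\<in>S. \<forall>v\<in>S. \<not> E u v)"

definition independence_number :: "'x set \<Rightarrow> ('x \<Rightarrow> 'x \<Rightarrow> bool) \<Rightarrow> nat" where
  "independence_number V E = Max {card S | S. independent_set V E S}"

definition hinner :: "complex ^ 'd \<Rightarrow> complex ^ 'd \<Rightarrow> complex" where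
  "hinner u v = (\<Sum>i\<in>UNIV. cnj (u $ i) * v $ i)"

text \<open>A vertex-encoding protocol with a perfect d-level quantum channel: an assignment of a
  unit vector psi v in C^d to every input v, with psi v orthogonal to psi w whenever v, w are
  adjacent in G(N). (The receiver's measurement is then determined by psi.)\<close>
definition vertex_encoding ::
  "'x set \<Rightarrow> 'y set \<Rightarrow> ('x \<Rightarrow> 'y \<Rightarrow> real) \<Rightarrow> ('x \<Rightarrow> complex ^ 'd) \<Rightarrow> bool" where
  "vertex_encoding X Y P psi \<longleftrightarrow>
     (\<forall>v\<in>X. hinner (psi v) (psi v) = 1) \<and>
     (\<forall>v\<in>X. \<forall>w\<in>X. confusable Y P v w \<longrightarrow> hinner (psi v) (psi w) = 0)"

end

theory Submission
  imports Defs
begin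

text \<open>In \<open>\<complex>\<^sup>2\<close> every line \<open>L\<close> has a unique orthogonal line \<open>L\<^sup>\<bottom>\<close>, and \<open>L\<^sup>\<bottom>\<^sup>\<bottom> = L\<close>, so
  orthogonality pairs the lines off. Choosing one line from each pair colours the unit
  vectors with two colours so that orthogonal vectors get different colours. Hence the
  confusability graph of a channel with a vertex encoding in \<open>\<complex>\<^sup>2\<close> is bipartite, and the
  larger colour class is an independent set containing at least half of the inputs.\<close>

lemma independent_set_card_le_independence_number:
  assumes "finite V" and "independent_set V E S"
  shows "card S \<le> independence_number V E"
proof -
  have "{card S | S. independent_set V E S} \<subseteq> card ` Pow V"
    by (auto simp: independent_set_def)
  then have "finite {card S | S. independent_set V E S}"
    using \<open>finite V\<close> finite_subset by blast
  then show ?thesis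
    unfolding independence_number_def using assms(2) by (intro Max_ge) auto
qed

lemma two_colourable_imp_large_independent_set:
  fixes colour :: "'a \<Rightarrow> bool"
  assumes "finite V"
    and proper: "\<And>u v. u \<in> V \<Longrightarrow> v \<in> V \<Longrightarrow> E u v \<Longrightarrow> colour u \<noteq> colour v"
  shows "\<exists>S. independent_set V E S \<and> card V \<le> 2 * card S"
proof -
  define C where "C b = {v \<in> V. colour v = b}" for b
  have independent: "independent_set V E (C b)" for b
    using proper by (auto simp: independent_set_def C_def)
  have "V = C True \<union> C False" and "C True \<inter> C False = {}"
    by (auto simp: C_def)
  then have "card V = card (C True) + card (C False)"
    using \<open>finite V\<close> by (metis card_Un_disjoint finite_Un)
  then have "card V \<le> 2 * card (C True) \<or> card V \<le> 2 * card (C False)"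
    by linarith
  then show ?thesis
    using independent by blast
qed

lemma hinner_2: "hinner (u :: complex ^ 2) w = cnj (u $ 1) * w $ 1 + cnj (u $ 2) * w $ 2"
  by (simp add: hinner_def sum_2)

lemma hinner_smult_right: "hinner u (c *s w) = c * hinner u w"
  by (simp add: hinner_def sum_distrib_left algebra_simps)

definition perp2 :: "complex ^ 2 \<Rightarrow> complex ^ 2" where
  "perp2 v = (\<chi> i. if i = 1 then - cnj (v $ 2) else cnj (v $ 1))"

lemma perp2_nth [simp]: "perp2 v $ 1 = - cnj (v $ 2)" "perp2 v $ 2 = cnj (v $ 1)"
  by (simp_all add: perp2_def)

lemma hinner_perp2_right: "hinner v (perp2 v) = 0"
  by (simp add: hinner_2 algebra_simps)

lemma perp2_smult: "perp2 (c *s v) = cnj c *s perp2 v"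
  by (simp add: vec_eq_iff forall_2)

lemma perp2_perp2: "perp2 (perp2 v) = - v"
  by (simp add: vec_eq_iff forall_2)

lemma unit_decomposition_2:
  assumes "hinner v v = 1"
  shows "x = hinner v x *s v + hinner (perp2 v) x *s perp2 v"
proof -
  let ?n = "cnj (v $ 1) * v $ 1 + cnj (v $ 2) * v $ 2"
  have "?n = 1"
    using assms by (simp add: hinner_2)
  moreover have "(hinner v x *s v + hinner (perp2 v) x *s perp2 v) $ 1 = x $ 1 * ?n"
    and "(hinner v x *s v + hinner (perp2 v) x *s perp2 v) $ 2 = x $ 2 * ?n"
    by (simp_all add: hinner_2 algebra_simps)
  ultimately show ?thesis
    unfolding vec_eq_iff forall_2 by simp
qed

definition complex_line :: "complex ^ 2 \<Rightarrow> (complex ^ 2) set" where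
  "complex_line z = range (\<lambda>c. c *s z)"

lemma complex_line_smult:
  assumes "c \<noteq> 0"
  shows "complex_line (c *s z) = complex_line z"
proof -
  have "d *s z = (d / c) *s (c *s z)" for d
    using assms by (simp add: vector_smult_assoc)
  then have "complex_line z \<subseteq> complex_line (c *s z)"
    unfolding complex_line_def by (metis image_subsetI rangeI)
  moreover have "complex_line (c *s z) \<subseteq> complex_line z"
    unfolding complex_line_def by (auto simp: vector_smult_assoc)
  ultimately show ?thesis
    by blast
qed

lemma complex_line_neq_perp2:
  assumes "hinner v v = 1"
  shows "complex_line v \<noteq> complex_line (perp2 v)"
proof
  assume "complex_line v = complex_line (perp2 v)"
  moreover have "v \<in> complex_line v"
    unfolding complex_line_def by (rule range_eqI[of _ _ 1]) simp
  ultimately obtain c where v: "v = c *s perp2 v"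
    unfolding complex_line_def by auto
  have "hinner v v = hinner v (c *s perp2 v)"
    using arg_cong[where f = "hinner v", OF v] .
  then show False
    using assms by (simp add: hinner_smult_right hinner_perp2_right)
qed

lemma orthogonal_units_complex_lines:
  assumes "hinner v v = 1" "hinner w w = 1" "hinner v w = 0"
  shows "complex_line w = complex_line (perp2 v)"
    and "complex_line (perp2 w) = complex_line v"
proof -
  define c where "c = hinner (perp2 v) w"
  have w: "w = c *s perp2 v"
    using unit_decomposition_2[OF assms(1), of w] assms(3) by (simp add: c_def)
  have "c \<noteq> 0"
    using assms(2) w by (auto simp: hinner_def)
  then show "complex_line w = complex_line (perp2 v)"
    using w complex_line_smult by simp
  have "perp2 w = (- cnj c) *s v"
    using w by (simp add: perp2_smult perp2_perp2)
  moreover have "- cnj c \<noteq> 0"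
    using \<open>c \<noteq> 0\<close> by simp
  ultimately show "complex_line (perp2 w) = complex_line v"
    by (metis complex_line_smult)
qed

definition perp_colour :: "complex ^ 2 \<Rightarrow> bool" where
  "perp_colour v \<longleftrightarrow>
     complex_line v = (SOME L. L \<in> {complex_line v, complex_line (perp2 v)})"

lemma perp_colour_orthogonal_units:
  assumes "hinner v v = 1" "hinner w w = 1" "hinner v w = 0"
  shows "perp_colour v \<noteq> perp_colour w"
proof -
  define r where "r = (SOME L. L \<in> {complex_line v, complex_line (perp2 v)})"
  have "{complex_line w, complex_line (perp2 w)} = {complex_line v, complex_line (perp2 v)}"
    using orthogonal_units_complex_lines[OF assms] by auto
  then have "perp_colour w \<longleftrightarrow> complex_line (perp2 v) = r"
    using orthogonal_units_complex_lines(1)[OF assms] by (simp add: perp_colour_def r_def)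
  moreover have "perp_colour v \<longleftrightarrow> complex_line v = r"
    by (simp add: perp_colour_def r_def)
  moreover have "r \<in> {complex_line v, complex_line (perp2 v)}"
    unfolding r_def by (rule someI[of _ "complex_line v"]) simp
  ultimately show ?thesis
    using complex_line_neq_perp2[OF assms(1)] by blast
qed

theorem corollary1:
  fixes X :: "'x set" and Y :: "'y set" and P :: "'x \<Rightarrow> 'y \<Rightarrow> real"
    and psi :: "'x \<Rightarrow> complex ^ 2"
  assumes "dm_channel X Y P"
    and "noisy_channel X Y P"
    and "vertex_encoding X Y P psi"
  shows "card X \<le> independence_number X (confusable Y P) * 2"
proof -
  have "finite X"
    using assms(1) by (simp add: dm_channel_def)
  have unit: "hinner (psi v) (psi v) = 1" if "v \<in> X" for v
    using assms(3) that by (simp add: vertex_encoding_def)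
  have orth: "hinner (psi v) (psi w) = 0" if "v \<in> X" "w \<in> X" "confusable Y P v w" for v w
    using assms(3) that by (simp add: vertex_encoding_def)
  obtain S where S: "independent_set X (confusable Y P) S" and "card X \<le> 2 * card S"
    using two_colourable_imp_large_independent_set[of X "confusable Y P" "perp_colour \<circ> psi"]
      \<open>finite X\<close> unit orth perp_colour_orthogonal_units by force
  moreover have "card S \<le> independence_number X (confusable Y P)"
    using independent_set_card_le_independence_number[OF \<open>finite X\<close> S] .
  ultimately show ?thesis
    by linarith
qed

end
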